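(* Let $n>24$, $0<\epsilon<\frac13$, $\delta>0$, $m=\epsilon^{-2}n^{1+\delta}$ (assumed to be an integer), and let $A\subseteq U^m$ be the set $$A=\left\{y\in U^m:\ \left|\sum_{i=1}^n\frac{k_i(y)(k_i(y)-1)}{m(m-1)}\cdot\frac1{\|p\|^2}-1\right|\le 3\epsilon\right\}.$$ For $s>0$ let $C_s=\{x\in U^m: d_T(x,A)<s\}$. Then for all $s>0$, $\mathsf P(C_s)\ge 1-\frac{10}{9}e^{-s^2/4}$.
   Context: Standing setup: $U$ is a finite set (the key space) with a probability measure $q$; $T=\{1,\dots,n\}$; $h:U\to T$ is an arbitrary function. $p_i=\sum_{u\in h^{-1}(i)}q(u)$ and $\|p\|^2=\sum_{i=1}^n p_i^2$. $U^m$ carries the product measure $q^m$, and $\mathsf P$ denotes probability under $q^m$. $k_i(y)=|\{j: h(y_j)=i\}|$. Talagrand's convex distance: for $x\in U^m$ and $A\subseteq U^m$, $d_T(x,A)=\sup\{\inf_{y\in A}\sum_{j=1}^m\alpha_j\mathbf 1(x_j\ne y_j)\ :\ \alpha\in\mathbb R^m,\ \alpha_j\ge 0,\ \sum_j\alpha_j^2\le 1\}$, where $\mathbf 1(x_j\ne y_j)$ is $1$ if $x_j\ne y_j$ and $0$ otherwise. *)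

theory Defs
  imports "HOL-Analysis.Analysis"
begin

definition cube :: "'a set \<Rightarrow> nat \<Rightarrow> (nat \<Rightarrow> 'a) set" where
  "cube U m = PiE {..<m} (\<lambda>_. U)"

definition prodprob :: "('a \<Rightarrow> real) \<Rightarrow> nat \<Rightarrow> (nat \<Rightarrow> 'a) set \<Rightarrow> real" where
  "prodprob q m S = (\<Sum>x\<in>S. \<Prod>j<m. q (x j))"

definition bucket_prob :: "'a set \<Rightarrow> ('a \<Rightarrow> real) \<Rightarrow> ('a \<Rightarrow> nat) \<Rightarrow> nat \<Rightarrow> real" where
  "bucket_prob U q h i = (\<Sum>u\<in>{u\<in>U. h u = i}. q u)"

definition normsq :: "'a set \<Rightarrow> ('a \<Rightarrow> real) \<Rightarrow> ('a \<Rightarrow> nat) \<Rightarrow> nat \<Rightarrow> real" where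
  "normsq U q h n = (\<Sum>i=1..n. (bucket_prob U q h i)^2)"

definition kcount :: "('a \<Rightarrow> nat) \<Rightarrow> nat \<Rightarrow> (nat \<Rightarrow> 'a) \<Rightarrow> nat \<Rightarrow> nat" where
  "kcount h m y i = card {j\<in>{..<m}. h (y j) = i}"

text \<open>Talagrand's convex distance (with values in ereal; inf over empty A is \<infinity>).\<close>
definition convex_dist :: "nat \<Rightarrow> (nat \<Rightarrow> 'a) \<Rightarrow> (nat \<Rightarrow> 'a) set \<Rightarrow> ereal" where
  "convex_dist m x A =
     (SUP \<alpha>\<in>{\<alpha>::nat \<Rightarrow> real. (\<forall>j<m. \<alpha> j \<ge> 0) \<and> (\<Sum>j<m. (\<alpha> j)^2) \<le> 1}.
        INF y\<in>A. ereal (\<Sum>j<m. \<alpha> j * (if x j \<noteq> y j then 1 else 0)))"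

end

theory Submission
  imports Defs
begin

(* Talagrand's convex distance is dominated by f(A, x), the squared Euclidean distance from the
   origin to the convex hull of the mismatch vectors (1[x_j ~= y_j])_j, y in A. Talagrand's
   inequality P(A) * E exp(f(A, x)/4) <= 1 follows by induction on the coordinates: for the section
   A_w = {y : y(i := w) in A} and the projection B of A one has
   f(A, x(i := w)) <= nu f(A_w, x) + (1 - nu) f(B, x) + (1 - nu)^2, and Hoelder's inequality with
   inf_nu r^(-nu) exp((1 - nu)^2/4) <= 2 - r (r = P(A_w)/P(B)) closes the induction. Markov's
   inequality then gives P(A) P(d_T >= s) <= exp(-s^2/4).
   It remains to show P(A) >= 9/10, by Chebyshev. The sum of k_i (k_i - 1) counts the ordered
   colliding pairs of positions, so its mean is m(m-1)||p||^2; indicators of disjoint pairs are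
   independent, which bounds the variance by m(m-1)(4m sum_i p_i^3 + 2||p||^2). Finally
   sum_i p_i^3 <= ||p||^3 <= (n/5) ||p||^4 since ||p||^2 >= 1/n and n >= 25, and m >= n/eps^2. *)

definition prod_weight :: "('a \<Rightarrow> real) \<Rightarrow> 'i set \<Rightarrow> ('i \<Rightarrow> 'a) \<Rightarrow> real" where
  "prod_weight q I x = (\<Prod>j\<in>I. q (x j))"

definition prod_prob :: "('a \<Rightarrow> real) \<Rightarrow> 'i set \<Rightarrow> ('i \<Rightarrow> 'a) set \<Rightarrow> real" where
  "prod_prob q I S = (\<Sum>x\<in>S. prod_weight q I x)"

lemma prodprob_eq_prod_prob: "prodprob q m S = prod_prob q {..<m} S"
  unfolding prodprob_def prod_prob_def prod_weight_def ..

locale finite_distribution =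
  fixes U :: "'a set" and q :: "'a \<Rightarrow> real"
  assumes finite_U: "finite U" and nonneg: "u \<in> U \<Longrightarrow> 0 \<le> q u"
    and sum_one: "(\<Sum>u\<in>U. q u) = 1"
begin

definition prod_expect :: "'i set \<Rightarrow> (('i \<Rightarrow> 'a) \<Rightarrow> real) \<Rightarrow> real" where
  "prod_expect I f = (\<Sum>x\<in>I \<rightarrow>\<^sub>E U. prod_weight q I x * f x)"

lemma finite_PiE_U: "finite I \<Longrightarrow> finite (I \<rightarrow>\<^sub>E U)"
  using finite_U by (intro finite_PiE) auto

lemma prod_weight_nonneg: "x \<in> I \<rightarrow>\<^sub>E U \<Longrightarrow> 0 \<le> prod_weight q I x"
  unfolding prod_weight_def using nonneg by (intro prod_nonneg) auto

lemma prod_weight_upd: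
  assumes "i \<notin> I" "finite I"
  shows "prod_weight q (insert i I) (x(i := w)) = q w * prod_weight q I x"
proof -
  have "(\<Prod>j\<in>I. q ((x(i := w)) j)) = (\<Prod>j\<in>I. q (x j))"
    using assms(1) by (intro prod.cong) auto
  then show ?thesis
    unfolding prod_weight_def using assms by simp
qed

lemma prod_expect_prod:
  assumes "finite I" "J \<subseteq> I"
  shows "prod_expect I (\<lambda>x. \<Prod>t\<in>J. g t (x t)) = (\<Prod>t\<in>J. \<Sum>u\<in>U. q u * g t u)"
proof -
  let ?g = "\<lambda>t u. q u * (if t \<in> J then g t u else 1)"
  have "(\<Prod>t\<in>J. \<Sum>u\<in>U. q u * g t u) = (\<Prod>t\<in>I. if t \<in> J then \<Sum>u\<in>U. q u * g t u else 1)"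
    using prod.inter_restrict[OF assms(1), of "\<lambda>t. \<Sum>u\<in>U. q u * g t u" J]
    by (simp add: Int_absorb1[OF assms(2)])
  also have "\<dots> = (\<Prod>t\<in>I. \<Sum>u\<in>U. ?g t u)"
    using sum_one by (intro prod.cong) auto
  also have "\<dots> = (\<Sum>x\<in>I \<rightarrow>\<^sub>E U. \<Prod>t\<in>I. ?g t (x t))"
    using assms(1) finite_U by (rule prod_sum_PiE)
  also have "\<dots> = prod_expect I (\<lambda>x. \<Prod>t\<in>J. g t (x t))"
    using assms unfolding prod_expect_def prod_weight_def
    by (simp add: prod.distrib prod.inter_restrict[OF assms(1), symmetric] Int_absorb1[OF assms(2)])
  finally show ?thesis ..
qed

lemma sum_prod_weight: "finite I \<Longrightarrow> (\<Sum>x\<in>I \<rightarrow>\<^sub>E U. prod_weight q I x) = 1"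
  using prod_expect_prod[of I "{}"] unfolding prod_expect_def by simp

lemma prod_expect_insert:
  assumes "i \<notin> I" "finite I"
  shows "prod_expect (insert i I) f = (\<Sum>w\<in>U. q w * prod_expect I (\<lambda>x. f (x(i := w))))"
proof -
  have "prod_expect (insert i I) f = (\<Sum>(w, x)\<in>U \<times> (I \<rightarrow>\<^sub>E U). prod_weight q (insert i I) (x(i := w)) * f (x(i := w)))"
    unfolding prod_expect_def PiE_insert_eq
    using inj_combinator[OF assms(1), of "\<lambda>_. U"] by (subst sum.reindex) (auto simp: split_def)
  also have "\<dots> = (\<Sum>w\<in>U. q w * prod_expect I (\<lambda>x. f (x(i := w))))"
    unfolding sum.cartesian_product[symmetric] prod_expect_def
    by (simp add: prod_weight_upd[OF assms] sum_distrib_left mult.assoc)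
  finally show ?thesis .
qed

lemma prod_expect_cong:
  "(\<And>x. x \<in> I \<rightarrow>\<^sub>E U \<Longrightarrow> f x = g x) \<Longrightarrow> prod_expect I f = prod_expect I g"
  unfolding prod_expect_def by (intro sum.cong) auto

lemma prod_expect_mono:
  "(\<And>x. x \<in> I \<rightarrow>\<^sub>E U \<Longrightarrow> f x \<le> g x) \<Longrightarrow> prod_expect I f \<le> prod_expect I g"
  unfolding prod_expect_def by (intro sum_mono mult_left_mono prod_weight_nonneg)

lemma prod_expect_const: "finite I \<Longrightarrow> prod_expect I (\<lambda>_. c) = c"
  unfolding prod_expect_def by (simp add: sum_distrib_right[symmetric] sum_prod_weight)

lemma prod_expect_sum:
  "prod_expect I (\<lambda>x. \<Sum>a\<in>K. f a x) = (\<Sum>a\<in>K. prod_expect I (f a))"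
  unfolding prod_expect_def by (simp add: sum_distrib_left sum.swap[of _ K])

lemma prod_expect_cmult: "prod_expect I (\<lambda>x. a * f x) = a * prod_expect I f"
  unfolding prod_expect_def by (simp add: sum_distrib_left mult.left_commute)

lemma prod_expect_centered_mult:
  assumes "finite I"
  shows "prod_expect I (\<lambda>x. (f x - a) * (g x - a))
    = prod_expect I (\<lambda>x. f x * g x) - a * prod_expect I f - a * prod_expect I g + a\<^sup>2"
  using prod_expect_const[OF assms, of "a\<^sup>2"] unfolding prod_expect_def
  by (simp add: sum_subtractf sum.distrib sum_distrib_left algebra_simps power2_eq_square)

lemma prod_prob_eq_expect:
  assumes "finite I" "S \<subseteq> I \<rightarrow>\<^sub>E U"
  shows "prod_prob q I S = prod_expect I (\<lambda>x. of_bool (x \<in> S))"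
proof -
  have "prod_prob q I S = (\<Sum>x\<in>I \<rightarrow>\<^sub>E U. if x \<in> S then prod_weight q I x else 0)"
    unfolding prod_prob_def
    by (simp add: sum.inter_restrict[OF finite_PiE_U[OF assms(1)], symmetric] Int_absorb1[OF assms(2)])
  then show ?thesis
    unfolding prod_expect_def by (auto intro: sum.cong)
qed

lemma prod_prob_insert:
  assumes "i \<notin> I" "finite I" "S \<subseteq> insert i I \<rightarrow>\<^sub>E U"
  shows "prod_prob q (insert i I) S = (\<Sum>w\<in>U. q w * prod_prob q I {x \<in> I \<rightarrow>\<^sub>E U. x(i := w) \<in> S})"
  using assms by (simp add: prod_prob_eq_expect prod_expect_insert cong: prod_expect_cong)

lemma prod_prob_mono: "S \<subseteq> T \<Longrightarrow> T \<subseteq> I \<rightarrow>\<^sub>E U \<Longrightarrow> finite I \<Longrightarrow> prod_prob q I S \<le> prod_prob q I T"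
  unfolding prod_prob_def
  by (intro sum_mono2 prod_weight_nonneg) (auto intro: finite_subset[OF _ finite_PiE_U])

lemma prod_prob_compl:
  assumes "finite I" "S \<subseteq> I \<rightarrow>\<^sub>E U"
  shows "prod_prob q I ((I \<rightarrow>\<^sub>E U) - S) = 1 - prod_prob q I S"
  using sum.subset_diff[OF assms(2) finite_PiE_U[OF assms(1)], of "prod_weight q I"]
  unfolding prod_prob_def sum_prod_weight[OF assms(1)] by simp

lemma prod_prob_le_one: "finite I \<Longrightarrow> S \<subseteq> I \<rightarrow>\<^sub>E U \<Longrightarrow> prod_prob q I S \<le> 1"
  using prod_prob_mono[of S "I \<rightarrow>\<^sub>E U" I] sum_prod_weight[of I] by (simp add: prod_prob_def)

lemma prod_prob_nonneg: "S \<subseteq> I \<rightarrow>\<^sub>E U \<Longrightarrow> 0 \<le> prod_prob q I S"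
  unfolding prod_prob_def by (intro sum_nonneg prod_weight_nonneg) auto

lemma prod_prob_insert_le_proj:
  assumes "i \<notin> I" "finite I" "S \<subseteq> insert i I \<rightarrow>\<^sub>E U"
  shows "prod_prob q (insert i I) S \<le> prod_prob q I {y \<in> I \<rightarrow>\<^sub>E U. \<exists>v\<in>U. y(i := v) \<in> S}"
proof -
  have "prod_prob q (insert i I) S
      \<le> (\<Sum>w\<in>U. q w * prod_prob q I {y \<in> I \<rightarrow>\<^sub>E U. \<exists>v\<in>U. y(i := v) \<in> S})"
    unfolding prod_prob_insert[OF assms]
    using assms(2) by (intro sum_mono mult_left_mono nonneg prod_prob_mono) auto
  then show ?thesis
    by (simp add: sum_distrib_right[symmetric] sum_one)
qed

lemma prod_prob_pos_imp_nonempty: "0 < prod_prob q I S \<Longrightarrow> S \<noteq> {}"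
  unfolding prod_prob_def by auto

lemma markov_inequality:
  assumes "S \<subseteq> I \<rightarrow>\<^sub>E U" "finite I" "\<And>x. x \<in> S \<Longrightarrow> c \<le> f x" "\<And>x. x \<in> I \<rightarrow>\<^sub>E U \<Longrightarrow> 0 \<le> f x"
  shows "c * prod_prob q I S \<le> prod_expect I f"
proof -
  have "c * prod_prob q I S = (\<Sum>x\<in>S. prod_weight q I x * c)"
    unfolding prod_prob_def by (simp add: sum_distrib_left mult.commute)
  also have "\<dots> \<le> (\<Sum>x\<in>S. prod_weight q I x * f x)"
    using assms(1,3) by (intro sum_mono mult_left_mono prod_weight_nonneg) auto
  also have "\<dots> \<le> prod_expect I f"
    unfolding prod_expect_def using assms(1,2,4)
    by (intro sum_mono2 finite_PiE_U mult_nonneg_nonneg prod_weight_nonneg) auto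
  finally show ?thesis .
qed

end

type_synonym ('i, 'a) mixture = "(real \<times> ('i \<Rightarrow> 'a)) list"

definition is_mixture :: "('i \<Rightarrow> 'a) set \<Rightarrow> ('i, 'a) mixture \<Rightarrow> bool" where
  "is_mixture A L \<longleftrightarrow> (\<forall>(c, y)\<in>set L. 0 \<le> c \<and> y \<in> A) \<and> (\<Sum>(c, y)\<leftarrow>L. c) = 1"

definition mismatch :: "('i \<Rightarrow> 'a) \<Rightarrow> ('i, 'a) mixture \<Rightarrow> 'i \<Rightarrow> real" where
  "mismatch x L j = (\<Sum>(c, y)\<leftarrow>L. c * of_bool (x j \<noteq> y j))"

definition mismatch_sq :: "'i set \<Rightarrow> ('i \<Rightarrow> 'a) \<Rightarrow> ('i, 'a) mixture \<Rightarrow> real" where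
  "mismatch_sq I x L = (\<Sum>j\<in>I. (mismatch x L j)\<^sup>2)"

text \<open>Talagrand's \<open>f(A, x)\<close>: the squared distance from the origin to the convex hull of the
  mismatch vectors \<open>(1[x\<^sub>j \<noteq> y\<^sub>j])\<^sub>j\<close>, \<open>y \<in> A\<close>, whose points are encoded by finite weighted
  lists. For \<open>A = {}\<close> the infimum is a junk value.\<close>

definition hull_dist_sq :: "'i set \<Rightarrow> ('i \<Rightarrow> 'a) set \<Rightarrow> ('i \<Rightarrow> 'a) \<Rightarrow> real" where
  "hull_dist_sq I A x = Inf (mismatch_sq I x ` Collect (is_mixture A))"

definition lift_mixture :: "'i \<Rightarrow> (('i \<Rightarrow> 'a) \<Rightarrow> 'a) \<Rightarrow> ('i, 'a) mixture \<Rightarrow> ('i, 'a) mixture" where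
  "lift_mixture i g L = map (\<lambda>(c, y). (c, y(i := g y))) L"

definition scale_mixture :: "real \<Rightarrow> ('i, 'a) mixture \<Rightarrow> ('i, 'a) mixture" where
  "scale_mixture a L = map (\<lambda>(c, y). (a * c, y)) L"

lemma is_mixture_singleton: "y \<in> A \<Longrightarrow> is_mixture A [(1, y)]"
  unfolding is_mixture_def by auto

lemma is_mixture_lift:
  "is_mixture B L \<Longrightarrow> (\<And>y. y \<in> B \<Longrightarrow> y(i := g y) \<in> A) \<Longrightarrow> is_mixture A (lift_mixture i g L)"
  unfolding is_mixture_def lift_mixture_def by (auto simp: split_def o_def)

lemma is_mixture_convex:
  assumes "is_mixture A L1" "is_mixture A L2" "0 \<le> \<nu>" "\<nu> \<le> 1"
  shows "is_mixture A (scale_mixture \<nu> L1 @ scale_mixture (1 - \<nu>) L2)"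
  using assms unfolding is_mixture_def scale_mixture_def
  by (auto simp: split_def o_def sum_list_const_mult)

lemma mismatch_nonneg: "is_mixture A L \<Longrightarrow> 0 \<le> mismatch x L j"
  unfolding is_mixture_def mismatch_def by (fastforce simp: split_def intro!: sum_list_nonneg)

lemma mismatch_le_one:
  assumes "is_mixture A L"
  shows "mismatch x L j \<le> 1"
proof -
  have "mismatch x L j \<le> (\<Sum>(c, y)\<leftarrow>L. c)"
    unfolding mismatch_def using assms
    by (intro sum_list_mono) (auto simp: is_mixture_def intro: mult_left_le)
  then show ?thesis
    using assms by (simp add: is_mixture_def)
qed

lemma mismatch_scale_append:
  "mismatch x (scale_mixture a L1 @ scale_mixture b L2) j = a * mismatch x L1 j + b * mismatch x L2 j"
  unfolding mismatch_def scale_mixture_def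
  by (simp add: split_def o_def mult.assoc sum_list_const_mult)

lemma mismatch_lift: "j \<noteq> i \<Longrightarrow> mismatch (x(i := w)) (lift_mixture i g L) j = mismatch x L j"
  unfolding mismatch_def lift_mixture_def by (simp add: split_def o_def)

lemma mismatch_lift_const: "mismatch (x(i := w)) (lift_mixture i (\<lambda>_. w) L) i = 0"
  unfolding mismatch_def lift_mixture_def by (simp add: split_def o_def)

lemma mismatch_sq_nonneg: "0 \<le> mismatch_sq I x L"
  unfolding mismatch_sq_def by (simp add: sum_nonneg)

lemma hull_dist_sq_le: "is_mixture A L \<Longrightarrow> hull_dist_sq I A x \<le> mismatch_sq I x L"
  unfolding hull_dist_sq_def
  by (rule cInf_lower) (auto intro: bdd_belowI[of _ 0] mismatch_sq_nonneg)

lemma hull_dist_sq_greatest: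
  "A \<noteq> {} \<Longrightarrow> (\<And>L. is_mixture A L \<Longrightarrow> c \<le> mismatch_sq I x L) \<Longrightarrow> c \<le> hull_dist_sq I A x"
  unfolding hull_dist_sq_def by (rule cInf_greatest) (auto dest: is_mixture_singleton)

lemma hull_dist_sq_nonneg: "A \<noteq> {} \<Longrightarrow> 0 \<le> hull_dist_sq I A x"
  by (rule hull_dist_sq_greatest) (auto intro: mismatch_sq_nonneg)

lemma hull_dist_sq_approx:
  assumes "A \<noteq> {}" "0 < e"
  obtains L where "is_mixture A L" "mismatch_sq I x L < hull_dist_sq I A x + e"
proof -
  have "Inf (mismatch_sq I x ` Collect (is_mixture A)) < hull_dist_sq I A x + e"
    using assms(2) by (simp add: hull_dist_sq_def)
  then have "\<exists>L. is_mixture A L \<and> mismatch_sq I x L < hull_dist_sq I A x + e"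
    using assms(1) by (subst (asm) cInf_less_iff)
      (auto intro: bdd_belowI[of _ 0] mismatch_sq_nonneg dest: is_mixture_singleton)
  then show ?thesis
    using that by blast
qed

lemma mismatch_sq_insert_lift:
  assumes "i \<notin> I" "finite I" "is_mixture B L"
  shows "mismatch_sq (insert i I) (x(i := w)) (lift_mixture i g L) \<le> mismatch_sq I x L + 1"
proof -
  have "(mismatch (x(i := w)) (lift_mixture i g L) i)\<^sup>2 \<le> 1"
    using mismatch_nonneg[OF is_mixture_lift[OF assms(3), of i g UNIV]]
      mismatch_le_one[OF is_mixture_lift[OF assms(3), of i g UNIV]]
    by (simp add: power_le_one)
  moreover have "(\<Sum>j\<in>I. (mismatch (x(i := w)) (lift_mixture i g L) j)\<^sup>2) = mismatch_sq I x L"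
    unfolding mismatch_sq_def using assms(1) by (intro sum.cong refl) (metis mismatch_lift)
  ultimately show ?thesis
    unfolding mismatch_sq_def using assms(1,2) by simp
qed

lemma mismatch_sq_insert_convex:
  fixes w :: 'a and g :: "('i \<Rightarrow> 'a) \<Rightarrow> 'a"
  assumes "i \<notin> I" "finite I" "0 \<le> \<nu>" "\<nu> \<le> 1" "is_mixture A1 L1" "is_mixture A2 L2"
  defines "L \<equiv> scale_mixture \<nu> (lift_mixture i (\<lambda>_. w) L1) @ scale_mixture (1 - \<nu>) (lift_mixture i g L2)"
  shows "mismatch_sq (insert i I) (x(i := w)) L
    \<le> \<nu> * mismatch_sq I x L1 + (1 - \<nu>) * mismatch_sq I x L2 + (1 - \<nu>)\<^sup>2"
proof -
  have "(mismatch (x(i := w)) L i)\<^sup>2 = ((1 - \<nu>) * mismatch (x(i := w)) (lift_mixture i g L2) i)\<^sup>2"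
    unfolding L_def mismatch_scale_append mismatch_lift_const by simp
  also have "\<dots> \<le> (1 - \<nu>)\<^sup>2"
    using assms(3,4) mismatch_nonneg[OF is_mixture_lift[OF assms(6), of i g UNIV]]
      mismatch_le_one[OF is_mixture_lift[OF assms(6), of i g UNIV]]
    by (simp add: power_mult_distrib mult_left_le power_le_one)
  finally have coord_i: "(mismatch (x(i := w)) L i)\<^sup>2 \<le> (1 - \<nu>)\<^sup>2" .
  have "(mismatch (x(i := w)) L j)\<^sup>2 \<le> \<nu> * (mismatch x L1 j)\<^sup>2 + (1 - \<nu>) * (mismatch x L2 j)\<^sup>2"
    if "j \<in> I" for j
  proof -
    have "j \<noteq> i" using that assms(1) by auto
    then have "mismatch (x(i := w)) L j = \<nu> * mismatch x L1 j + (1 - \<nu>) * mismatch x L2 j"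
      unfolding L_def mismatch_scale_append by (simp add: mismatch_lift)
    moreover have "(\<nu> * a + (1 - \<nu>) * b)\<^sup>2 \<le> \<nu> * a\<^sup>2 + (1 - \<nu>) * b\<^sup>2" for a b :: real
    proof -
      have "\<nu> * a\<^sup>2 + (1 - \<nu>) * b\<^sup>2 - (\<nu> * a + (1 - \<nu>) * b)\<^sup>2 = \<nu> * (1 - \<nu>) * (a - b)\<^sup>2"
        by (simp add: power2_eq_square algebra_simps)
      moreover have "0 \<le> \<nu> * (1 - \<nu>) * (a - b)\<^sup>2"
        using assms(3,4) by simp
      ultimately show ?thesis by linarith
    qed
    ultimately show ?thesis by simp
  qed
  then have "(\<Sum>j\<in>I. (mismatch (x(i := w)) L j)\<^sup>2) \<le> \<nu> * mismatch_sq I x L1 + (1 - \<nu>) * mismatch_sq I x L2"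
    unfolding mismatch_sq_def by (simp add: sum_mono sum_distrib_left sum.distrib[symmetric])
  with coord_i show ?thesis
    unfolding mismatch_sq_def using assms(1,2) by simp
qed

lemma hull_dist_sq_insert_proj:
  assumes "i \<notin> I" "finite I" "B \<noteq> {}" "\<And>y. y \<in> B \<Longrightarrow> \<exists>v. y(i := v) \<in> A"
  shows "hull_dist_sq (insert i I) A (x(i := w)) \<le> hull_dist_sq I B x + 1"
proof -
  obtain g where g: "\<And>y. y \<in> B \<Longrightarrow> y(i := g y) \<in> A"
    using assms(4) by metis
  have "hull_dist_sq (insert i I) A (x(i := w)) - 1 \<le> mismatch_sq I x L" if "is_mixture B L" for L
  proof -
    have "is_mixture A (lift_mixture i g L)"
      using that g by (rule is_mixture_lift)
    then show ?thesis
      using hull_dist_sq_le[of A _ "insert i I" "x(i := w)"] mismatch_sq_insert_lift[OF assms(1,2) that, of x w g]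
      by fastforce
  qed
  then show ?thesis
    using hull_dist_sq_greatest[OF assms(3)] by fastforce
qed

lemma hull_dist_sq_insert_convex:
  assumes "i \<notin> I" "finite I" "0 \<le> \<nu>" "\<nu> \<le> 1" "A1 \<noteq> {}" "A2 \<noteq> {}"
    and "\<And>y. y \<in> A1 \<Longrightarrow> y(i := w) \<in> A" "\<And>y. y \<in> A2 \<Longrightarrow> \<exists>v. y(i := v) \<in> A"
  shows "hull_dist_sq (insert i I) A (x(i := w))
    \<le> \<nu> * hull_dist_sq I A1 x + (1 - \<nu>) * hull_dist_sq I A2 x + (1 - \<nu>)\<^sup>2"
proof (rule field_le_epsilon)
  fix e :: real
  assume "0 < e"
  obtain g where g: "\<And>y. y \<in> A2 \<Longrightarrow> y(i := g y) \<in> A"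
    using assms(8) by metis
  obtain L1 where L1: "is_mixture A1 L1" "mismatch_sq I x L1 < hull_dist_sq I A1 x + e"
    using hull_dist_sq_approx[OF assms(5) \<open>0 < e\<close>] .
  obtain L2 where L2: "is_mixture A2 L2" "mismatch_sq I x L2 < hull_dist_sq I A2 x + e"
    using hull_dist_sq_approx[OF assms(6) \<open>0 < e\<close>] .
  let ?L = "scale_mixture \<nu> (lift_mixture i (\<lambda>_. w) L1) @ scale_mixture (1 - \<nu>) (lift_mixture i g L2)"
  have "is_mixture A (lift_mixture i (\<lambda>_. w) L1)" "is_mixture A (lift_mixture i g L2)"
    using L1(1) L2(1) assms(7) g by (auto intro: is_mixture_lift)
  then have "is_mixture A ?L"
    using assms(3,4) by (rule is_mixture_convex)
  then have "hull_dist_sq (insert i I) A (x(i := w)) \<le> mismatch_sq (insert i I) (x(i := w)) ?L"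
    by (rule hull_dist_sq_le)
  also have "\<dots> \<le> \<nu> * mismatch_sq I x L1 + (1 - \<nu>) * mismatch_sq I x L2 + (1 - \<nu>)\<^sup>2"
    by (rule mismatch_sq_insert_convex[OF assms(1-4) L1(1) L2(1)])
  also have "\<dots> \<le> \<nu> * (hull_dist_sq I A1 x + e) + (1 - \<nu>) * (hull_dist_sq I A2 x + e) + (1 - \<nu>)\<^sup>2"
    using assms(3,4) L1(2) L2(2) by (intro add_mono mult_left_mono) auto
  finally show "hull_dist_sq (insert i I) A (x(i := w))
    \<le> \<nu> * hull_dist_sq I A1 x + (1 - \<nu>) * hull_dist_sq I A2 x + (1 - \<nu>)\<^sup>2 + e"
    by (simp add: algebra_simps)
qed

lemma obtain_le_weighted_average:
  fixes f :: "'b \<Rightarrow> real"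
  assumes "\<forall>(c, y)\<in>set L. 0 \<le> c" "(\<Sum>(c, y)\<leftarrow>L. c) = 1"
  obtains c y where "(c, y) \<in> set L" "f y \<le> (\<Sum>(c, y)\<leftarrow>L. c * f y)"
proof -
  have "L \<noteq> []" using assms(2) by auto
  define M where "M = Min ((f \<circ> snd) ` set L)"
  have "M \<in> (f \<circ> snd) ` set L"
    unfolding M_def using \<open>L \<noteq> []\<close> by (intro Min_in) auto
  then obtain p where p: "p \<in> set L" "M = f (snd p)"
    by auto
  have "M = (\<Sum>(c, y)\<leftarrow>L. c * M)"
    using assms(2) by (simp add: split_def sum_list_mult_const)
  also have "\<dots> \<le> (\<Sum>(c, y)\<leftarrow>L. c * f y)"
  proof (intro sum_list_mono, clarify)
    fix c y
    assume "(c, y) \<in> set L"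
    moreover have "M \<le> f y"
      unfolding M_def using calculation by (intro Min_le) force+
    ultimately show "c * M \<le> c * f y"
      using assms(1) by (auto intro: mult_left_mono)
  qed
  finally show ?thesis
    using that[of "fst p" "snd p"] p by simp
qed

lemma convex_dist_le_mismatch_sq:
  assumes "is_mixture A L"
  shows "convex_dist m x A \<le> ereal (sqrt (mismatch_sq {..<m} x L))"
  unfolding convex_dist_def
proof (rule SUP_least)
  fix \<alpha> :: "nat \<Rightarrow> real"
  assume "\<alpha> \<in> {\<alpha>. (\<forall>j<m. 0 \<le> \<alpha> j) \<and> (\<Sum>j<m. (\<alpha> j)\<^sup>2) \<le> 1}"
  then have \<alpha>: "(\<Sum>j<m. (\<alpha> j)\<^sup>2) \<le> 1" by simp
  define d where "d y = (\<Sum>j<m. \<alpha> j * (if x j \<noteq> y j then 1 else 0))" for y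
  have "(\<Sum>(c, y)\<leftarrow>L. c * d y) = (\<Sum>j<m. \<alpha> j * mismatch x L j)"
    unfolding d_def mismatch_def
    by (induction L) (auto simp: sum.distrib sum_distrib_left algebra_simps of_bool_def)
  moreover have weights: "\<forall>(c, y)\<in>set L. 0 \<le> c" "(\<Sum>(c, y)\<leftarrow>L. c) = 1"
    using assms by (auto simp: is_mixture_def)
  ultimately obtain c y where cy: "(c, y) \<in> set L" "d y \<le> (\<Sum>j<m. \<alpha> j * mismatch x L j)"
    using obtain_le_weighted_average[OF weights, of d] by metis
  have "(\<Sum>j<m. \<alpha> j * mismatch x L j)\<^sup>2 \<le> (\<Sum>j<m. (\<alpha> j)\<^sup>2) * mismatch_sq {..<m} x L"
    unfolding mismatch_sq_def by (rule Cauchy_Schwarz_ineq_sum)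
  also have "\<dots> \<le> mismatch_sq {..<m} x L"
    using \<alpha> by (intro mult_left_le_one_le mismatch_sq_nonneg sum_nonneg) auto
  finally have "d y \<le> sqrt (mismatch_sq {..<m} x L)"
    using cy(2) real_le_rsqrt order_trans by blast
  moreover have "y \<in> A"
    using cy(1) assms unfolding is_mixture_def by auto
  ultimately show "(INF y\<in>A. ereal (\<Sum>j<m. \<alpha> j * (if x j \<noteq> y j then 1 else 0)))
    \<le> ereal (sqrt (mismatch_sq {..<m} x L))"
    unfolding d_def by (meson INF_lower2 ereal_less_eq(3))
qed

lemma hull_dist_sq_ge_convex_dist:
  assumes "A \<noteq> {}" "0 \<le> s" "ereal s \<le> convex_dist m x A"
  shows "s\<^sup>2 \<le> hull_dist_sq {..<m} A x"
proof (rule hull_dist_sq_greatest[OF assms(1)])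
  fix L
  assume "is_mixture A L"
  then have "s \<le> sqrt (mismatch_sq {..<m} x L)"
    using assms(3) convex_dist_le_mismatch_sq order_trans by fastforce
  then have "s\<^sup>2 \<le> (sqrt (mismatch_sq {..<m} x L))\<^sup>2"
    using assms(2) by (rule power_mono)
  then show "s\<^sup>2 \<le> mismatch_sq {..<m} x L"
    by (simp add: mismatch_sq_nonneg)
qed

lemma exp_diff_square_add_exp_neg_le:
  fixes t :: real
  assumes "0 \<le> t"
  shows "exp (t - t\<^sup>2) + exp (- t) \<le> 2"
proof -
  let ?f = "\<lambda>y::real. exp (y - y\<^sup>2) + exp (- y)"
  have "?f t \<le> ?f 0"
  proof (rule DERIV_nonpos_imp_nonincreasing[OF assms])
    fix y :: real
    have "DERIV ?f y :> (1 - 2 * y) * exp (y - y\<^sup>2) - exp (- y)"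
      by (auto intro!: derivative_eq_intros)
    moreover have "(1 - 2 * y) * exp (y - y\<^sup>2) \<le> exp (- 2 * y) * exp (y - y\<^sup>2)"
      using exp_ge_add_one_self[of "- 2 * y"] by (intro mult_right_mono) auto
    moreover have "exp (- 2 * y) * exp (y - y\<^sup>2) \<le> exp (- y)"
      unfolding exp_add[symmetric] by simp
    ultimately show "\<exists>D. DERIV ?f y :> D \<and> D \<le> 0"
      by (intro exI conjI) (assumption, linarith)
  qed
  then show ?thesis by simp
qed

lemma talagrand_weight_bound:
  fixes a b :: real
  assumes "0 < a" "a \<le> b" "exp (- 1/2) \<le> a / b"
  defines "\<nu> \<equiv> 1 + 2 * ln (a / b)"
  shows "0 \<le> \<nu>" "\<nu> \<le> 1"
    and "exp ((1 - \<nu>)\<^sup>2 / 4) * (1 / a) powr \<nu> * (1 / b) powr (1 - \<nu>) \<le> (2 - a / b) / b"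
proof -
  define t where "t = - ln (a / b)"
  have b: "0 < b" using assms(1,2) by simp
  have "ln (exp (- 1/2)) \<le> ln (a / b)"
    using assms(1,3) b by (subst ln_le_cancel_iff) auto
  moreover have "ln (a / b) \<le> 0"
    using assms(1,2) b by simp
  ultimately have t: "0 \<le> t" "t \<le> 1/2"
    unfolding t_def by auto
  then show "0 \<le> \<nu>" "\<nu> \<le> 1"
    unfolding \<nu>_def t_def by auto
  have exponent: "(1 - \<nu>)\<^sup>2 / 4 - \<nu> * ln a - (1 - \<nu>) * ln b = t - t\<^sup>2 - ln b"
    unfolding \<nu>_def t_def using assms(1) b by (simp add: ln_div power2_eq_square field_simps)
  have "exp ((1 - \<nu>)\<^sup>2 / 4) * (1 / a) powr \<nu> * (1 / b) powr (1 - \<nu>)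
      = exp ((1 - \<nu>)\<^sup>2 / 4 + \<nu> * ln (1 / a) + (1 - \<nu>) * ln (1 / b))"
    using assms(1) b by (simp add: powr_def exp_add)
  also have "\<dots> = exp (t - t\<^sup>2) / b"
    using assms(1) b exponent by (simp add: ln_div exp_diff)
  also have "\<dots> \<le> (2 - exp (- t)) / b"
    using exp_diff_square_add_exp_neg_le[OF t(1)] b by (intro divide_right_mono) auto
  also have "exp (- t) = a / b"
    unfolding t_def using assms(1) b by simp
  finally show "exp ((1 - \<nu>)\<^sup>2 / 4) * (1 / a) powr \<nu> * (1 / b) powr (1 - \<nu>) \<le> (2 - a / b) / b" .
qed

lemma sum_exp_convex_le_powr:
  fixes w a b :: "'b \<Rightarrow> real"
  assumes "\<And>x. x \<in> S \<Longrightarrow> 0 \<le> w x" "0 \<le> \<nu>" "\<nu> \<le> 1"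
    and pos: "0 < (\<Sum>x\<in>S. w x * exp (a x))" "0 < (\<Sum>x\<in>S. w x * exp (b x))"
  shows "(\<Sum>x\<in>S. w x * exp (\<nu> * a x + (1 - \<nu>) * b x))
    \<le> (\<Sum>x\<in>S. w x * exp (a x)) powr \<nu> * (\<Sum>x\<in>S. w x * exp (b x)) powr (1 - \<nu>)"
proof -
  define A where "A = (\<Sum>x\<in>S. w x * exp (a x))"
  define B where "B = (\<Sum>x\<in>S. w x * exp (b x))"
  define K where "K = A powr \<nu> * B powr (1 - \<nu>)"
  have A: "0 < A" and B: "0 < B" using pos unfolding A_def B_def .
  have K: "K = exp (\<nu> * ln A + (1 - \<nu>) * ln B)"
    unfolding K_def using A B by (simp add: powr_def exp_add)
  \<comment> \<open>Normalize both exponents by their partition functions, then use convexity of exp.\<close>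
  have pointwise: "exp (\<nu> * a x + (1 - \<nu>) * b x) \<le> K * (\<nu> * (exp (a x) / A) + (1 - \<nu>) * (exp (b x) / B))" for x
  proof -
    have "exp (\<nu> * a x + (1 - \<nu>) * b x) = K * exp ((1 - \<nu>) * (b x - ln B) + \<nu> * (a x - ln A))"
      unfolding K by (simp add: exp_add[symmetric] algebra_simps)
    also have "\<dots> \<le> K * ((1 - \<nu>) * exp (b x - ln B) + \<nu> * exp (a x - ln A))"
      using convex_onD[OF exp_convex, of \<nu> "b x - ln B" "a x - ln A"] assms(2,3)
      unfolding K by (intro mult_left_mono) auto
    finally show ?thesis
      using A B by (simp add: exp_diff algebra_simps)
  qed
  have "(\<Sum>x\<in>S. w x * exp (\<nu> * a x + (1 - \<nu>) * b x))
      \<le> (\<Sum>x\<in>S. w x * (K * (\<nu> * (exp (a x) / A) + (1 - \<nu>) * (exp (b x) / B))))"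
    using assms(1) by (intro sum_mono mult_left_mono pointwise) auto
  also have "\<dots> = K * \<nu> / A * (\<Sum>x\<in>S. w x * exp (a x)) + K * (1 - \<nu>) / B * (\<Sum>x\<in>S. w x * exp (b x))"
    by (simp add: sum.distrib sum_distrib_left algebra_simps)
  also have "\<dots> = K"
    using A B unfolding A_def[symmetric] B_def[symmetric] by (simp add: field_simps)
  finally show ?thesis
    unfolding K_def A_def B_def .
qed

context finite_distribution
begin

lemma prod_expect_exp_convex_le_powr:
  assumes "finite I" "0 \<le> \<nu>" "\<nu> \<le> 1"
    and "0 < prod_expect I (\<lambda>x. exp (a x))" "0 < prod_expect I (\<lambda>x. exp (b x))"
  shows "prod_expect I (\<lambda>x. exp (\<nu> * a x + (1 - \<nu>) * b x))
    \<le> prod_expect I (\<lambda>x. exp (a x)) powr \<nu> * prod_expect I (\<lambda>x. exp (b x)) powr (1 - \<nu>)"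
  using assms unfolding prod_expect_def by (intro sum_exp_convex_le_powr prod_weight_nonneg)

definition hull_moment :: "'i set \<Rightarrow> ('i \<Rightarrow> 'a) set \<Rightarrow> real" where
  "hull_moment I A = prod_expect I (\<lambda>x. exp (hull_dist_sq I A x / 4))"

lemma one_le_hull_moment: "finite I \<Longrightarrow> A \<noteq> {} \<Longrightarrow> 1 \<le> hull_moment I A"
  unfolding hull_moment_def
  using prod_expect_mono[of I "\<lambda>_. 1" "\<lambda>x. exp (hull_dist_sq I A x / 4)"]
  by (simp add: prod_expect_const hull_dist_sq_nonneg)

lemma hull_moment_empty:
  assumes "A \<noteq> {}"
  shows "hull_moment {} A = 1"
proof -
  obtain y where "y \<in> A" using assms by auto
  then have "hull_dist_sq {} A x \<le> 0" for x
    using hull_dist_sq_le[OF is_mixture_singleton, of y A "{}" x] by (simp add: mismatch_sq_def)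
  then have "hull_dist_sq {} A x = 0" for x
    using hull_dist_sq_nonneg[OF assms] by (meson antisym)
  then show ?thesis
    by (simp add: hull_moment_def prod_expect_const)
qed

lemma hull_moment_slice_le_proj:
  assumes "i \<notin> I" "finite I" "B \<noteq> {}" "\<And>y. y \<in> B \<Longrightarrow> \<exists>v. y(i := v) \<in> A"
  shows "prod_expect I (\<lambda>x. exp (hull_dist_sq (insert i I) A (x(i := w)) / 4)) \<le> exp (1/4) * hull_moment I B"
proof -
  have "prod_expect I (\<lambda>x. exp (hull_dist_sq (insert i I) A (x(i := w)) / 4))
      \<le> prod_expect I (\<lambda>x. exp (1/4) * exp (hull_dist_sq I B x / 4))"
    using hull_dist_sq_insert_proj[OF assms]
    by (intro prod_expect_mono) (simp add: exp_add[symmetric] add_divide_distrib[symmetric] add.commute)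
  then show ?thesis
    unfolding prod_expect_cmult hull_moment_def .
qed

lemma hull_moment_slice_le_convex:
  assumes "i \<notin> I" "finite I" "0 \<le> \<nu>" "\<nu> \<le> 1" "A1 \<noteq> {}" "A2 \<noteq> {}"
    and "\<And>y. y \<in> A1 \<Longrightarrow> y(i := w) \<in> A" "\<And>y. y \<in> A2 \<Longrightarrow> \<exists>v. y(i := v) \<in> A"
  shows "prod_expect I (\<lambda>x. exp (hull_dist_sq (insert i I) A (x(i := w)) / 4))
    \<le> exp ((1 - \<nu>)\<^sup>2 / 4) * (hull_moment I A1 powr \<nu> * hull_moment I A2 powr (1 - \<nu>))"
proof -
  have "prod_expect I (\<lambda>x. exp (hull_dist_sq (insert i I) A (x(i := w)) / 4))
      \<le> prod_expect I (\<lambda>x. exp ((1 - \<nu>)\<^sup>2 / 4) *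
        exp (\<nu> * (hull_dist_sq I A1 x / 4) + (1 - \<nu>) * (hull_dist_sq I A2 x / 4)))"
    using hull_dist_sq_insert_convex[OF assms]
    by (intro prod_expect_mono) (simp add: exp_add[symmetric] field_simps)
  also have "\<dots> \<le> exp ((1 - \<nu>)\<^sup>2 / 4) * (hull_moment I A1 powr \<nu> * hull_moment I A2 powr (1 - \<nu>))"
    unfolding prod_expect_cmult hull_moment_def
    using one_le_hull_moment[OF assms(2,5)] one_le_hull_moment[OF assms(2,6)]
    by (intro mult_left_mono prod_expect_exp_convex_le_powr assms(2-4)) (auto simp: hull_moment_def)
  finally show ?thesis .
qed

lemma hull_moment_slice_le:
  fixes A :: "('i \<Rightarrow> 'a) set" and I :: "'i set" and i :: 'i and w :: 'a
  defines "B \<equiv> {y \<in> I \<rightarrow>\<^sub>E U. \<exists>v\<in>U. y(i := v) \<in> A}"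
    and "Aw \<equiv> {y \<in> I \<rightarrow>\<^sub>E U. y(i := w) \<in> A}"
  assumes iI: "i \<notin> I" and fin: "finite I" and w: "w \<in> U"
    and IH: "\<And>A'. A' \<subseteq> I \<rightarrow>\<^sub>E U \<Longrightarrow> A' \<noteq> {} \<Longrightarrow> prod_prob q I A' * hull_moment I A' \<le> 1"
    and B_pos: "0 < prod_prob q I B"
  shows "prod_expect I (\<lambda>x. exp (hull_dist_sq (insert i I) A (x(i := w)) / 4))
    \<le> (2 - prod_prob q I Aw / prod_prob q I B) / prod_prob q I B"
    (is "?T \<le> (2 - ?Pa / ?PB) / ?PB")
proof -
  have B_ne: "B \<noteq> {}" using B_pos by (rule prod_prob_pos_imp_nonempty)
  have B_proj: "\<And>y. y \<in> B \<Longrightarrow> \<exists>v. y(i := v) \<in> A" unfolding B_def by blast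
  have SB: "hull_moment I B \<le> 1 / ?PB"
    using IH[OF _ B_ne] B_pos unfolding B_def by (simp add: field_simps)
  have Pa_le: "?Pa \<le> ?PB"
    using fin w by (intro prod_prob_mono) (auto simp: Aw_def B_def)
  \<comment> \<open>The optimal weight \<open>\<nu> = 1 + 2 ln (?Pa / ?PB)\<close> is negative below \<open>exp (-1/2)\<close>;
    there \<open>\<nu> = 0\<close> is used.\<close>
  consider "?Pa / ?PB < exp (- 1/2)" | "exp (- 1/2) \<le> ?Pa / ?PB" by linarith
  then show ?thesis
  proof cases
    case 1
    have e: "exp (1/4 :: real) \<le> 2 - ?Pa / ?PB"
      using exp_diff_square_add_exp_neg_le[of "1/2"] 1 by (simp add: power2_eq_square)
    then have "0 \<le> 2 - ?Pa / ?PB"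
      using exp_gt_zero[of "1/4"] by linarith
    have "?T \<le> exp (1/4) * hull_moment I B"
      by (rule hull_moment_slice_le_proj[OF iI fin B_ne B_proj])
    also have "\<dots> \<le> (2 - ?Pa / ?PB) * (1 / ?PB)"
      using e \<open>0 \<le> 2 - ?Pa / ?PB\<close> SB one_le_hull_moment[OF fin B_ne] by (intro mult_mono) auto
    finally show ?thesis by simp
  next
    case 2
    define \<nu> where "\<nu> = 1 + 2 * ln (?Pa / ?PB)"
    have "0 < ?Pa / ?PB"
      using 2 exp_gt_zero[of "- 1/2"] by linarith
    then have Pa_pos: "0 < ?Pa"
      using B_pos by (simp add: zero_less_divide_iff)
    note \<nu> = talagrand_weight_bound[OF Pa_pos Pa_le 2, folded \<nu>_def]
    have Aw_ne: "Aw \<noteq> {}" using Pa_pos by (rule prod_prob_pos_imp_nonempty)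
    have SA: "hull_moment I Aw \<le> 1 / ?Pa"
      using IH[OF _ Aw_ne] Pa_pos unfolding Aw_def by (simp add: field_simps)
    have "?T \<le> exp ((1 - \<nu>)\<^sup>2 / 4) * (hull_moment I Aw powr \<nu> * hull_moment I B powr (1 - \<nu>))"
      by (rule hull_moment_slice_le_convex[OF iI fin \<nu>(1,2) Aw_ne B_ne _ B_proj]) (simp add: Aw_def)
    also have "\<dots> \<le> exp ((1 - \<nu>)\<^sup>2 / 4) * ((1 / ?Pa) powr \<nu> * (1 / ?PB) powr (1 - \<nu>))"
      using SA SB \<nu>(1,2) one_le_hull_moment[OF fin Aw_ne] one_le_hull_moment[OF fin B_ne]
      by (intro mult_left_mono mult_mono powr_mono2) auto
    also have "\<dots> \<le> (2 - ?Pa / ?PB) / ?PB"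
      using \<nu>(3) by (simp add: mult.assoc)
    finally show ?thesis .
  qed
qed

lemma talagrand_averaging_step:
  assumes "0 < b" "\<And>w. w \<in> U \<Longrightarrow> 0 \<le> a w" "\<And>w. w \<in> U \<Longrightarrow> T w \<le> (2 - a w / b) / b"
  shows "(\<Sum>w\<in>U. q w * a w) * (\<Sum>w\<in>U. q w * T w) \<le> 1"
proof -
  let ?a = "\<Sum>w\<in>U. q w * a w"
  have "(\<Sum>w\<in>U. q w * T w) \<le> (\<Sum>w\<in>U. q w * ((2 - a w / b) / b))"
    using assms(3) by (intro sum_mono mult_left_mono nonneg) auto
  also have "\<dots> = (2 - ?a / b) / b"
    using sum_one
    by (simp add: sum_divide_distrib[symmetric] sum_subtractf sum_distrib_left[symmetric]
        sum_distrib_right[symmetric] diff_divide_distrib algebra_simps)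
  finally have "?a * (\<Sum>w\<in>U. q w * T w) \<le> ?a * ((2 - ?a / b) / b)"
    using assms(2) nonneg by (intro mult_left_mono sum_nonneg mult_nonneg_nonneg) auto
  also have "\<dots> = 1 - (1 - ?a / b)\<^sup>2"
    using assms(1) by (simp add: power2_eq_square field_simps)
  also have "\<dots> \<le> 1"
    by simp
  finally show ?thesis .
qed

theorem talagrand_inequality:
  assumes "finite I" "A \<subseteq> I \<rightarrow>\<^sub>E U" "A \<noteq> {}"
  shows "prod_prob q I A * hull_moment I A \<le> 1"
  using assms
proof (induction I arbitrary: A rule: finite_induct)
  case empty
  then show ?case
    using prod_prob_le_one[OF _ empty.prems(1)] by (simp add: hull_moment_empty)
next
  case (insert i I)
  define B where "B = {y \<in> I \<rightarrow>\<^sub>E U. \<exists>v\<in>U. y(i := v) \<in> A}"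
  define Aw where "Aw w = {y \<in> I \<rightarrow>\<^sub>E U. y(i := w) \<in> A}" for w
  let ?PA = "prod_prob q (insert i I) A" and ?PB = "prod_prob q I B"
  have PA_le: "?PA \<le> ?PB"
    unfolding B_def by (rule prod_prob_insert_le_proj[OF insert.hyps(2,1) insert.prems(1)])
  show ?case
  proof (cases "0 < ?PB")
    case False
    have "1 \<le> hull_moment (insert i I) A"
      using insert.hyps(1) insert.prems(2) by (intro one_le_hull_moment) auto
    then show ?thesis
      using False PA_le mult_nonpos_nonneg[of ?PA "hull_moment (insert i I) A"] by linarith
  next
    case True
    then have B_pos: "0 < prod_prob q I {y \<in> I \<rightarrow>\<^sub>E U. \<exists>v\<in>U. y(i := v) \<in> A}"
      by (simp add: B_def)
    have "?PA * hull_moment (insert i I) A = (\<Sum>w\<in>U. q w * prod_prob q I (Aw w))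
        * (\<Sum>w\<in>U. q w * prod_expect I (\<lambda>x. exp (hull_dist_sq (insert i I) A (x(i := w)) / 4)))"
      unfolding Aw_def hull_moment_def
      by (simp only: prod_prob_insert[OF insert.hyps(2,1) insert.prems(1)] prod_expect_insert[OF insert.hyps(2,1)])
    also have "\<dots> \<le> 1"
    proof (rule talagrand_averaging_step[OF True])
      fix w
      assume "w \<in> U"
      then show "prod_expect I (\<lambda>x. exp (hull_dist_sq (insert i I) A (x(i := w)) / 4))
          \<le> (2 - prod_prob q I (Aw w) / ?PB) / ?PB"
        unfolding Aw_def B_def by (rule hull_moment_slice_le[OF insert.hyps(2,1) _ insert.IH B_pos])
      show "0 \<le> prod_prob q I (Aw w)"
        unfolding Aw_def by (rule prod_prob_nonneg) blast
    qed
    finally show ?thesis .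
  qed
qed

corollary talagrand_tail_bound:
  assumes "A \<subseteq> cube U m" "A \<noteq> {}" "0 \<le> s"
  shows "prod_prob q {..<m} A * prod_prob q {..<m} {x \<in> cube U m. ereal s \<le> convex_dist m x A}
    \<le> exp (- s\<^sup>2 / 4)"
    (is "?PA * ?PD \<le> _")
proof -
  have "exp (s\<^sup>2 / 4) * ?PD \<le> hull_moment {..<m} A"
    unfolding hull_moment_def
    by (rule markov_inequality) (auto simp: cube_def hull_dist_sq_ge_convex_dist assms(2,3))
  then have "?PA * (exp (s\<^sup>2 / 4) * ?PD) \<le> ?PA * hull_moment {..<m} A"
    using prod_prob_nonneg assms(1) unfolding cube_def by (intro mult_left_mono) auto
  also have "\<dots> \<le> 1"
    using assms(1,2) unfolding cube_def by (intro talagrand_inequality) auto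
  finally have "exp (s\<^sup>2 / 4) * (?PA * ?PD) \<le> 1"
    by (simp add: algebra_simps)
  then show ?thesis
    by (simp add: exp_minus field_simps)
qed

corollary talagrand_concentration:
  assumes "A \<subseteq> cube U m" "0 < prod_prob q {..<m} A" "0 \<le> s"
  shows "1 - exp (- s\<^sup>2 / 4) / prod_prob q {..<m} A
    \<le> prod_prob q {..<m} {x \<in> cube U m. convex_dist m x A < ereal s}"
proof -
  let ?D = "{x \<in> cube U m. ereal s \<le> convex_dist m x A}"
  have "prod_prob q {..<m} A * prod_prob q {..<m} ?D \<le> exp (- s\<^sup>2 / 4)"
    using assms(1) prod_prob_pos_imp_nonempty[OF assms(2)] assms(3) by (rule talagrand_tail_bound)
  then have "prod_prob q {..<m} ?D \<le> exp (- s\<^sup>2 / 4) / prod_prob q {..<m} A"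
    using assms(2) by (simp add: pos_le_divide_eq mult.commute)
  moreover have "{x \<in> cube U m. convex_dist m x A < ereal s} = cube U m - ?D"
    by auto
  then have "prod_prob q {..<m} {x \<in> cube U m. convex_dist m x A < ereal s} = 1 - prod_prob q {..<m} ?D"
    unfolding cube_def by (simp add: prod_prob_compl)
  ultimately show ?thesis
    by linarith
qed

end

lemma sum_of_bool_eq_mult:
  fixes f :: "'b \<Rightarrow> 'c::semiring_1"
  assumes "finite S" "a \<in> S"
  shows "(\<Sum>i\<in>S. of_bool (a = i) * f i) = f a"
proof -
  have "(\<Sum>i\<in>S. of_bool (a = i) * f i) = (\<Sum>i\<in>S. if a = i then f i else 0)"
    by (intro sum.cong) auto
  then show ?thesis
    using assms by simp
qed

definition offdiag :: "nat \<Rightarrow> (nat \<times> nat) set" where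
  "offdiag m = {(j, l) \<in> {..<m} \<times> {..<m}. j \<noteq> l}"

lemma finite_offdiag [simp]: "finite (offdiag m)"
  unfolding offdiag_def by (rule finite_subset[of _ "{..<m} \<times> {..<m}"]) auto

lemma sum_square_offdiag_split:
  "(\<Sum>p\<in>{..<m} \<times> {..<m}. g p) = (\<Sum>p\<in>offdiag m. g p) + (\<Sum>j<m. g (j, j))"
proof -
  have "{..<m} \<times> {..<m} = offdiag m \<union> (\<lambda>j. (j, j)) ` {..<m}"
    unfolding offdiag_def by auto
  moreover have "offdiag m \<inter> (\<lambda>j. (j, j)) ` {..<m} = {}"
    unfolding offdiag_def by auto
  ultimately show ?thesis
    by (simp add: sum.union_disjoint sum.reindex inj_on_def)
qed

lemma card_offdiag: "real (card (offdiag m)) = real m * (real m - 1)"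
  using sum_square_offdiag_split[of "\<lambda>_. 1 :: real" m]
  by (simp add: card_cartesian_product algebra_simps)

lemma card_offdiag_meeting_le: "card (offdiag m \<inter> {p. {fst p, snd p} \<inter> {j, l} \<noteq> {}}) \<le> 4 * m"
proof -
  have "card (offdiag m \<inter> {p. {fst p, snd p} \<inter> {j, l} \<noteq> {}}) \<le> card ({j, l} \<times> {..<m} \<union> {..<m} \<times> {j, l})"
    by (intro card_mono) (auto simp: offdiag_def)
  also have "\<dots> \<le> card ({j, l} \<times> {..<m}) + card ({..<m} \<times> {j, l})"
    by (rule card_Un_le)
  also have "\<dots> = 2 * (card {j, l} * m)"
    by (simp add: card_cartesian_product)
  also have "\<dots> \<le> 2 * (2 * m)"
    by (intro mult_le_mono2 mult_le_mono1) (simp add: card_insert_if)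
  finally show ?thesis by simp
qed

lemma card_offdiag_doubleton_le: "card (offdiag m \<inter> {p. {fst p, snd p} = {j, l}}) \<le> 2"
proof -
  have "offdiag m \<inter> {p. {fst p, snd p} = {j, l}} \<subseteq> {(j, l), (l, j)}"
  proof
    fix p
    assume "p \<in> offdiag m \<inter> {p. {fst p, snd p} = {j, l}}"
    then have "p = (j, l) \<or> p = (l, j)"
      unfolding doubleton_eq_iff by (cases p) auto
    then show "p \<in> {(j, l), (l, j)}" by simp
  qed
  then have "card (offdiag m \<inter> {p. {fst p, snd p} = {j, l}}) \<le> card {(j, l), (l, j)}"
    by (rule card_mono[rotated]) simp
  also have "\<dots> \<le> 2"
    by (rule card_insert_le_m1) simp_all
  finally show ?thesis .
qed

lemma nine_mult_le_of_le_eps_sq: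
  fixes \<epsilon> n m :: real
  assumes "0 < \<epsilon>" "\<epsilon> < 1/3" "0 < n" "n \<le> \<epsilon>\<^sup>2 * m"
  shows "9 * n \<le> m"
proof -
  have "\<epsilon>\<^sup>2 \<le> (1/3)\<^sup>2"
    using assms(1,2) by (intro power_mono) auto
  moreover have "0 < \<epsilon>\<^sup>2 * m"
    using assms(3,4) by linarith
  then have "0 < m"
    by (simp add: zero_less_mult_iff)
  ultimately have "\<epsilon>\<^sup>2 * m \<le> (1/3)\<^sup>2 * m"
    by (intro mult_right_mono) auto
  then show ?thesis
    using assms(4) by (simp add: power2_eq_square)
qed

lemma sample_size_ge:
  fixes \<epsilon> \<delta> n m :: real
  assumes "0 < \<epsilon>" "0 \<le> \<delta>" "1 \<le> n" "m = \<epsilon> powr (-2) * n powr (1 + \<delta>)"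
  shows "n \<le> \<epsilon>\<^sup>2 * m"
proof -
  have "n = n powr 1"
    using assms(3) by simp
  also have "\<dots> \<le> n powr (1 + \<delta>)"
    using assms(2,3) by (intro powr_mono) auto
  also have "\<dots> = \<epsilon>\<^sup>2 * m"
    using assms(1) by (simp add: assms(4) powr_minus powr_numeral)
  finally show ?thesis .
qed

lemma collision_variance_arith:
  fixes m n \<epsilon> S2 S3 :: real
  assumes "225 \<le> m" "n \<le> \<epsilon>\<^sup>2 * m" "0 \<le> S2" "1 \<le> n * S2" "S3 \<le> n / 5 * S2\<^sup>2"
  shows "10 * (m * (m - 1) * (4 * m * S3 + 2 * S2)) \<le> (3 * \<epsilon> * (m * (m - 1) * S2))\<^sup>2"
proof -
  have "S2 * 1 \<le> S2 * (n * S2)"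
    using assms(4,3) by (rule mult_left_mono)
  then have "S2 \<le> n * S2\<^sup>2"
    by (simp add: power2_eq_square algebra_simps)
  then have "10 * (4 * m * S3 + 2 * S2) \<le> 10 * (4 * m * (n / 5 * S2\<^sup>2) + 2 * (n * S2\<^sup>2))"
    using assms(1,5) by (intro mult_left_mono add_mono) auto
  also have "\<dots> = (8 * m + 20) * S2\<^sup>2 * n"
    by (simp add: algebra_simps)
  also have "\<dots> \<le> (8 * m + 20) * S2\<^sup>2 * (\<epsilon>\<^sup>2 * m)"
    using assms(1,2) by (intro mult_left_mono) auto
  also have "\<dots> \<le> 9 * (m - 1) * S2\<^sup>2 * (\<epsilon>\<^sup>2 * m)"
    using assms(1) by (intro mult_right_mono) auto
  finally have "10 * (4 * m * S3 + 2 * S2) \<le> 9 * \<epsilon>\<^sup>2 * (m * (m - 1)) * S2\<^sup>2"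
    by (simp add: algebra_simps)
  then have "m * (m - 1) * (10 * (4 * m * S3 + 2 * S2)) \<le> m * (m - 1) * (9 * \<epsilon>\<^sup>2 * (m * (m - 1)) * S2\<^sup>2)"
    using assms(1) by (intro mult_left_mono) auto
  then show ?thesis
    by (simp add: power2_eq_square algebra_simps)
qed

locale hashing = finite_distribution U q for U :: "'a set" and q +
  fixes h :: "'a \<Rightarrow> nat" and n :: nat
  assumes h_range: "u \<in> U \<Longrightarrow> h u \<in> {1..n}"
begin

definition collision :: "(nat \<Rightarrow> 'a) \<Rightarrow> nat \<Rightarrow> nat \<Rightarrow> real" where
  "collision x j l = of_bool (h (x j) = h (x l))"

definition normcube :: real where
  "normcube = (\<Sum>i=1..n. (bucket_prob U q h i) ^ 3)"

lemma bucket_prob_eq: "bucket_prob U q h i = (\<Sum>u\<in>U. q u * of_bool (h u = i))"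
  unfolding bucket_prob_def using finite_U
  by (simp add: sum.inter_filter[symmetric] of_bool_def if_distrib cong: if_cong)

lemma bucket_prob_nonneg: "0 \<le> bucket_prob U q h i"
  unfolding bucket_prob_def using nonneg by (intro sum_nonneg) auto

lemma sum_bucket_prob: "(\<Sum>i=1..n. bucket_prob U q h i) = 1"
proof -
  have "(\<Sum>i=1..n. bucket_prob U q h i) = (\<Sum>u\<in>U. q u * (\<Sum>i=1..n. of_bool (h u = i)))"
    unfolding bucket_prob_eq sum_distrib_left by (rule sum.swap)
  also have "\<dots> = 1"
    using h_range sum_one by (simp add: of_bool_def sum.delta cong: sum.cong)
  finally show ?thesis .
qed

lemma normsq_nonneg: "0 \<le> normsq U q h n"
  unfolding normsq_def by (simp add: sum_nonneg)

lemma normcube_nonneg: "0 \<le> normcube"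
  unfolding normcube_def by (simp add: sum_nonneg bucket_prob_nonneg)

lemma one_le_n_normsq: "1 \<le> real n * normsq U q h n"
proof -
  have "(\<Sum>i=1..n. 1 * bucket_prob U q h i)\<^sup>2 \<le> (\<Sum>i=1..n. 1\<^sup>2) * (\<Sum>i=1..n. (bucket_prob U q h i)\<^sup>2)"
    by (rule Cauchy_Schwarz_ineq_sum)
  then show ?thesis
    using sum_bucket_prob unfolding normsq_def by simp
qed

lemma normsq_pos: "0 < normsq U q h n"
  using one_le_n_normsq normsq_nonneg by (cases "normsq U q h n = 0") auto

lemma normcube_le:
  assumes "25 \<le> n"
  shows "normcube \<le> real n / 5 * (normsq U q h n)\<^sup>2"
proof -
  let ?S2 = "normsq U q h n"
  have "bucket_prob U q h i \<le> sqrt ?S2" if "i \<in> {1..n}" for i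
  proof -
    have "(bucket_prob U q h i)\<^sup>2 \<le> ?S2"
      unfolding normsq_def using that by (intro member_le_sum) auto
    then show ?thesis
      using bucket_prob_nonneg real_le_rsqrt by blast
  qed
  then have "bucket_prob U q h i ^ 3 \<le> sqrt ?S2 * (bucket_prob U q h i)\<^sup>2" if "i \<in> {1..n}" for i
    using that mult_right_mono[of "bucket_prob U q h i" "sqrt ?S2" "(bucket_prob U q h i)\<^sup>2"]
    by (simp add: power2_eq_square power3_eq_cube mult.assoc)
  then have "normcube \<le> (\<Sum>i=1..n. sqrt ?S2 * (bucket_prob U q h i)\<^sup>2)"
    unfolding normcube_def by (rule sum_mono)
  also have "\<dots> = sqrt ?S2 * ?S2"
    unfolding normsq_def by (simp add: sum_distrib_left)
  also have "sqrt ?S2 \<le> sqrt (real n) * ?S2"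
  proof -
    have "sqrt ?S2 * 1 \<le> sqrt ?S2 * sqrt (real n * ?S2)"
      using one_le_n_normsq normsq_nonneg by (intro mult_left_mono) auto
    also have "\<dots> = sqrt (real n) * ?S2"
      using normsq_nonneg by (simp add: real_sqrt_mult)
    finally show ?thesis by simp
  qed
  also have "sqrt (real n) \<le> real n / 5"
  proof -
    have "5 \<le> sqrt (real n)"
      using assms real_le_rsqrt[of 5 "real n"] by simp
    then have "sqrt (real n) * 5 \<le> sqrt (real n) * sqrt (real n)"
      by (intro mult_left_mono) auto
    then show ?thesis by simp
  qed
  finally show ?thesis
    using normsq_nonneg by (simp add: power2_eq_square mult_right_mono mult.assoc)
qed

lemma real_kcount: "real (kcount h m x i) = (\<Sum>j<m. of_bool (h (x j) = i))"
  unfolding kcount_def by (simp add: Int_def)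

lemma collision_eq_sum:
  assumes "x \<in> cube U m" "j < m"
  shows "collision x j l = (\<Sum>i=1..n. of_bool (h (x j) = i) * of_bool (h (x l) = i))"
proof -
  have "h (x j) \<in> {1..n}" using assms h_range by (auto simp: cube_def)
  have "collision x j l = of_bool (h (x l) = h (x j))"
    unfolding collision_def by (simp only: eq_commute)
  also have "\<dots> = (\<Sum>i=1..n. of_bool (h (x j) = i) * of_bool (h (x l) = i))"
    by (rule sum_of_bool_eq_mult[symmetric]) (use \<open>h (x j) \<in> {1..n}\<close> in auto)
  finally show ?thesis .
qed

lemma sum_kcount_collisions:
  assumes "x \<in> cube U m"
  shows "(\<Sum>i=1..n. real (kcount h m x i) * (real (kcount h m x i) - 1)) = (\<Sum>(j, l)\<in>offdiag m. collision x j l)"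
proof -
  have "real (kcount h m x i) * (real (kcount h m x i) - 1)
      = (\<Sum>(j, l)\<in>offdiag m. of_bool (h (x j) = i) * of_bool (h (x l) = i))" for i
  proof -
    have "(real (kcount h m x i))\<^sup>2 = (\<Sum>(j, l)\<in>{..<m} \<times> {..<m}. of_bool (h (x j) = i) * of_bool (h (x l) = i))"
      unfolding real_kcount power2_eq_square sum_product sum.cartesian_product ..
    also have "\<dots> = (\<Sum>(j, l)\<in>offdiag m. of_bool (h (x j) = i) * of_bool (h (x l) = i)) + real (kcount h m x i)"
      unfolding sum_square_offdiag_split real_kcount by (simp add: of_bool_conj[symmetric])
    finally show ?thesis
      by (simp add: power2_eq_square algebra_simps)
  qed
  then have "(\<Sum>i=1..n. real (kcount h m x i) * (real (kcount h m x i) - 1))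
      = (\<Sum>i=1..n. \<Sum>p\<in>offdiag m. of_bool (h (x (fst p)) = i) * of_bool (h (x (snd p)) = i))"
    by (simp only: split_def)
  also have "\<dots> = (\<Sum>p\<in>offdiag m. \<Sum>i=1..n. of_bool (h (x (fst p)) = i) * of_bool (h (x (snd p)) = i))"
    by (rule sum.swap)
  also have "\<dots> = (\<Sum>(j, l)\<in>offdiag m. collision x j l)"
  proof (intro sum.cong refl, clarify)
    fix j l
    assume "(j, l) \<in> offdiag m"
    then show "(\<Sum>i=1..n. of_bool (h (x (fst (j, l))) = i) * of_bool (h (x (snd (j, l))) = i)) = collision x j l"
      using assms by (subst collision_eq_sum) (auto simp: offdiag_def)
  qed
  finally show ?thesis .
qed

lemma collision_commute: "collision x l j = collision x j l"
  unfolding collision_def by (simp only: eq_commute)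

lemma collision_doubleton: "{j, l} = {a, b} \<Longrightarrow> collision x j l = collision x a b"
  by (auto simp: doubleton_eq_iff collision_commute)

lemma expect_bucket_indicators:
  fixes m :: nat
  assumes "J \<subseteq> {..<m}"
  shows "prod_expect {..<m} (\<lambda>x. \<Prod>t\<in>J. of_bool (h (x t) = b t)) = (\<Prod>t\<in>J. bucket_prob U q h (b t))"
  unfolding bucket_prob_eq by (rule prod_expect_prod[OF finite_lessThan assms])

lemma expect_collision:
  assumes "j < m" "l < m" "j \<noteq> l"
  shows "prod_expect {..<m} (\<lambda>x. collision x j l) = normsq U q h n"
proof -
  have "prod_expect {..<m} (\<lambda>x. collision x j l)
      = (\<Sum>i=1..n. prod_expect {..<m} (\<lambda>x. \<Prod>t\<in>{j, l}. of_bool (h (x t) = i)))"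
    using assms by (simp add: collision_eq_sum cube_def prod_expect_sum[symmetric] cong: prod_expect_cong)
  also have "\<dots> = (\<Sum>i=1..n. \<Prod>t\<in>{j, l}. bucket_prob U q h i)"
    using assms by (intro sum.cong refl expect_bucket_indicators) auto
  also have "\<dots> = normsq U q h n"
    using assms by (simp add: normsq_def power2_eq_square)
  finally show ?thesis .
qed

lemma expect_collision_shared:
  assumes "j < m" "l < m" "l' < m" "distinct [j, l, l']"
  shows "prod_expect {..<m} (\<lambda>x. collision x j l * collision x j l') = normcube"
proof -
  have "prod_expect {..<m} (\<lambda>x. collision x j l * collision x j l')
      = (\<Sum>i=1..n. prod_expect {..<m} (\<lambda>x. \<Prod>t\<in>{j, l, l'}. of_bool (h (x t) = i)))"
    unfolding prod_expect_sum[symmetric]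
  proof (rule prod_expect_cong)
    fix x :: "nat \<Rightarrow> 'a"
    assume "x \<in> {..<m} \<rightarrow>\<^sub>E U"
    then have "h (x j) \<in> {1..n}" using assms(1) h_range by auto
    have "collision x j l * collision x j l' = of_bool (h (x l) = h (x j)) * of_bool (h (x l') = h (x j))"
      unfolding collision_def by (simp only: eq_commute)
    also have "\<dots> = (\<Sum>i=1..n. of_bool (h (x j) = i) * (of_bool (h (x l) = i) * of_bool (h (x l') = i)))"
      by (rule sum_of_bool_eq_mult[symmetric]) (use \<open>h (x j) \<in> {1..n}\<close> in auto)
    also have "\<dots> = (\<Sum>i=1..n. \<Prod>t\<in>{j, l, l'}. of_bool (h (x t) = i))"
      using assms(4) by (intro sum.cong refl) simp
    finally show "collision x j l * collision x j l' = (\<Sum>i=1..n. \<Prod>t\<in>{j, l, l'}. of_bool (h (x t) = i))" .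
  qed
  also have "\<dots> = (\<Sum>i=1..n. \<Prod>t\<in>{j, l, l'}. bucket_prob U q h i)"
    using assms by (intro sum.cong refl expect_bucket_indicators) auto
  also have "\<dots> = normcube"
    using assms by (simp add: normcube_def power3_eq_cube mult.assoc)
  finally show ?thesis .
qed

lemma expect_collision_disjoint:
  assumes "j < m" "l < m" "j' < m" "l' < m" "distinct [j, l, j', l']"
  shows "prod_expect {..<m} (\<lambda>x. collision x j l * collision x j' l') = (normsq U q h n)\<^sup>2"
proof -
  let ?b = "\<lambda>i i' t. if t \<in> {j, l} then i else i'"
  have prod4: "(\<Prod>t\<in>{j, l, j', l'}. f t) = f j * f l * (f j' * f l')" for f :: "nat \<Rightarrow> real"
    using assms(5) by (simp add: algebra_simps)
  have "prod_expect {..<m} (\<lambda>x. collision x j l * collision x j' l')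
      = (\<Sum>i=1..n. \<Sum>i'=1..n. prod_expect {..<m} (\<lambda>x. \<Prod>t\<in>{j, l, j', l'}. of_bool (h (x t) = ?b i i' t)))"
    unfolding prod_expect_sum[symmetric]
  proof (rule prod_expect_cong)
    fix x
    assume "x \<in> {..<m} \<rightarrow>\<^sub>E U"
    then have x: "x \<in> cube U m" by (simp add: cube_def)
    have "collision x j l * collision x j' l'
        = (\<Sum>i=1..n. of_bool (h (x j) = i) * of_bool (h (x l) = i))
          * (\<Sum>i'=1..n. of_bool (h (x j') = i') * of_bool (h (x l') = i'))"
      unfolding collision_eq_sum[OF x assms(1)] collision_eq_sum[OF x assms(3)] ..
    also have "\<dots> = (\<Sum>i=1..n. \<Sum>i'=1..n. of_bool (h (x j) = i) * of_bool (h (x l) = i)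
          * (of_bool (h (x j') = i') * of_bool (h (x l') = i')))"
      by (rule sum_product)
    also have "\<dots> = (\<Sum>i=1..n. \<Sum>i'=1..n. \<Prod>t\<in>{j, l, j', l'}. of_bool (h (x t) = ?b i i' t))"
      unfolding prod4 using assms(5) by (intro sum.cong refl) simp
    finally show "collision x j l * collision x j' l'
      = (\<Sum>i=1..n. \<Sum>i'=1..n. \<Prod>t\<in>{j, l, j', l'}. of_bool (h (x t) = ?b i i' t))" .
  qed
  also have "\<dots> = (\<Sum>i=1..n. \<Sum>i'=1..n. \<Prod>t\<in>{j, l, j', l'}. bucket_prob U q h (?b i i' t))"
    using assms(1-4) by (intro sum.cong refl expect_bucket_indicators) auto
  also have "\<dots> = (normsq U q h n)\<^sup>2"
    using assms(5) unfolding prod4 normsq_def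
    by (simp add: power2_eq_square sum_product algebra_simps)
  finally show ?thesis .
qed

lemma collision_covariance_le:
  assumes "j < m" "l < m" "j' < m" "l' < m" "j \<noteq> l" "j' \<noteq> l'"
  shows "prod_expect {..<m} (\<lambda>x. (collision x j l - normsq U q h n) * (collision x j' l' - normsq U q h n))
    \<le> of_bool ({j', l'} \<inter> {j, l} \<noteq> {}) * normcube + of_bool ({j', l'} = {j, l}) * normsq U q h n"
proof -
  let ?S2 = "normsq U q h n"
  let ?E = "prod_expect {..<m} (\<lambda>x. collision x j l * collision x j' l')"
  have cov: "prod_expect {..<m} (\<lambda>x. (collision x j l - ?S2) * (collision x j' l' - ?S2)) = ?E - ?S2\<^sup>2"
    using assms by (simp add: prod_expect_centered_mult expect_collision power2_eq_square)
  consider (disjoint) "{j', l'} \<inter> {j, l} = {}" | (equal) "{j', l'} = {j, l}"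
    | (shared) a b b' where "distinct [a, b, b']" "{j, l} = {a, b}" "{j', l'} = {a, b'}"
    using assms(5,6) by (auto simp: doubleton_eq_iff) blast+
  then show ?thesis
  proof cases
    case disjoint
    then have "?E = ?S2\<^sup>2"
      using assms by (intro expect_collision_disjoint) auto
    then show ?thesis
      unfolding cov using disjoint normsq_nonneg normcube_nonneg by simp
  next
    case equal
    then have "?E = prod_expect {..<m} (\<lambda>x. collision x j l)"
      unfolding collision_doubleton[OF equal] by (simp add: collision_def of_bool_conj[symmetric])
    then have "?E = ?S2"
      using assms by (simp add: expect_collision)
    then show ?thesis
      unfolding cov using equal
      by simp (meson neg_le_0_iff_le normcube_nonneg order_trans zero_le_power2)
  next
    case shared
    then have "?E = prod_expect {..<m} (\<lambda>x. collision x a b * collision x a b')"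
      by (simp add: collision_doubleton[of j l a b] collision_doubleton[of j' l' a b'])
    also have "\<dots> = normcube"
      using shared assms by (intro expect_collision_shared) (auto simp: doubleton_eq_iff)
    finally show ?thesis
      unfolding cov using shared normsq_nonneg by auto
  qed
qed

lemma sum_covariance_bound_le:
  assumes "j < m" "l < m"
  shows "(\<Sum>p\<in>offdiag m. of_bool ({fst p, snd p} \<inter> {j, l} \<noteq> {}) * normcube
      + of_bool ({fst p, snd p} = {j, l}) * normsq U q h n)
    \<le> 4 * real m * normcube + 2 * normsq U q h n"
proof -
  have "(\<Sum>p\<in>offdiag m. of_bool ({fst p, snd p} \<inter> {j, l} \<noteq> {}) * normcube
      + of_bool ({fst p, snd p} = {j, l}) * normsq U q h n)
      = real (card (offdiag m \<inter> {p. {fst p, snd p} \<inter> {j, l} \<noteq> {}})) * normcube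
        + real (card (offdiag m \<inter> {p. {fst p, snd p} = {j, l}})) * normsq U q h n"
    by (simp only: sum.distrib sum_distrib_right[symmetric] sum_of_bool_eq finite_offdiag)
  also have "\<dots> \<le> 4 * real m * normcube + 2 * normsq U q h n"
    using card_offdiag_meeting_le[of m j l] card_offdiag_doubleton_le[of m j l] normcube_nonneg normsq_nonneg
    by (intro add_mono mult_right_mono) auto
  finally show ?thesis .
qed

lemma collision_variance_le:
  "prod_expect {..<m} (\<lambda>x. ((\<Sum>(j, l)\<in>offdiag m. collision x j l) - real m * (real m - 1) * normsq U q h n)\<^sup>2)
    \<le> real m * (real m - 1) * (4 * real m * normcube + 2 * normsq U q h n)"
proof -
  let ?S2 = "normsq U q h n"
  let ?Y = "\<lambda>x p. collision x (fst p) (snd p) - ?S2"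
  have centered: "(\<Sum>(j, l)\<in>offdiag m. collision x j l) - real m * (real m - 1) * ?S2 = (\<Sum>p\<in>offdiag m. ?Y x p)" for x
    by (simp add: split_def sum_subtractf card_offdiag)
  have "prod_expect {..<m} (\<lambda>x. ((\<Sum>(j, l)\<in>offdiag m. collision x j l) - real m * (real m - 1) * ?S2)\<^sup>2)
      = (\<Sum>p\<in>offdiag m. \<Sum>p'\<in>offdiag m. prod_expect {..<m} (\<lambda>x. ?Y x p * ?Y x p'))"
    by (simp only: centered power2_eq_square sum_product prod_expect_sum)
  also have "\<dots> \<le> (\<Sum>p\<in>offdiag m. \<Sum>p'\<in>offdiag m. of_bool ({fst p', snd p'} \<inter> {fst p, snd p} \<noteq> {}) * normcube
      + of_bool ({fst p', snd p'} = {fst p, snd p}) * ?S2)"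
    by (intro sum_mono collision_covariance_le) (auto simp: offdiag_def)
  also have "\<dots> \<le> (\<Sum>p\<in>offdiag m. 4 * real m * normcube + 2 * ?S2)"
    by (intro sum_mono sum_covariance_bound_le) (auto simp: offdiag_def)
  also have "\<dots> = real m * (real m - 1) * (4 * real m * normcube + 2 * ?S2)"
    by (simp add: card_offdiag)
  finally show ?thesis .
qed

lemma normalized_collision_count:
  assumes "x \<in> cube U m" "real m * (real m - 1) \<noteq> 0"
  defines "\<mu> \<equiv> real m * (real m - 1) * normsq U q h n"
  shows "(\<Sum>i=1..n. real (kcount h m x i) * (real (kcount h m x i) - 1) / (real m * (real m - 1)))
      / normsq U q h n - 1 = ((\<Sum>(j, l)\<in>offdiag m. collision x j l) - \<mu>) / \<mu>"
proof -
  have "(\<Sum>i=1..n. real (kcount h m x i) * (real (kcount h m x i) - 1) / (real m * (real m - 1)))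
      = (\<Sum>(j, l)\<in>offdiag m. collision x j l) / (real m * (real m - 1))"
    by (simp only: sum_divide_distrib[symmetric] sum_kcount_collisions[OF assms(1)])
  moreover have "z / (real m * (real m - 1)) / normsq U q h n - 1 = (z - \<mu>) / \<mu>" for z
    unfolding \<mu>_def using assms(2) normsq_pos by (simp add: field_simps)
  ultimately show ?thesis
    by simp
qed

theorem collision_estimate_concentration:
  assumes "0 < \<epsilon>" "\<epsilon> < 1/3" "25 \<le> n" "real n \<le> \<epsilon>\<^sup>2 * real m"
  shows "9/10 \<le> prod_prob q {..<m} {y \<in> cube U m.
    \<bar>(\<Sum>i=1..n. real (kcount h m y i) * (real (kcount h m y i) - 1) / (real m * (real m - 1)))
      / normsq U q h n - 1\<bar> \<le> 3 * \<epsilon>}"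
    (is "_ \<le> prod_prob q {..<m} ?A")
proof -
  let ?Z = "\<lambda>x. \<Sum>(j, l)\<in>offdiag m. collision x j l"
  define \<mu> where "\<mu> = real m * (real m - 1) * normsq U q h n"
  have m: "225 \<le> real m"
    using nine_mult_le_of_le_eps_sq[OF assms(1,2) _ assms(4)] assms(3) by simp
  then have m1: "real m * (real m - 1) \<noteq> 0" and \<mu>_pos: "0 < \<mu>"
    unfolding \<mu>_def using normsq_pos by auto
  have "(3 * \<epsilon> * \<mu>)\<^sup>2 \<le> (?Z x - \<mu>)\<^sup>2" if "x \<in> cube U m - ?A" for x
  proof -
    have "3 * \<epsilon> < \<bar>?Z x - \<mu>\<bar> / \<mu>"
      using that normalized_collision_count[OF _ m1, of x] \<mu>_pos
      by (simp add: \<mu>_def abs_div not_le)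
    then have "3 * \<epsilon> * \<mu> \<le> \<bar>?Z x - \<mu>\<bar>"
      using \<mu>_pos by (simp add: pos_less_divide_eq)
    then have "(3 * \<epsilon> * \<mu>)\<^sup>2 \<le> \<bar>?Z x - \<mu>\<bar>\<^sup>2"
      using assms(1) \<mu>_pos by (intro power_mono) auto
    then show ?thesis by simp
  qed
  then have "(3 * \<epsilon> * \<mu>)\<^sup>2 * prod_prob q {..<m} (cube U m - ?A) \<le> prod_expect {..<m} (\<lambda>x. (?Z x - \<mu>)\<^sup>2)"
    unfolding cube_def by (intro markov_inequality) auto
  also have "\<dots> \<le> real m * (real m - 1) * (4 * real m * normcube + 2 * normsq U q h n)"
    unfolding \<mu>_def by (rule collision_variance_le)
  also have "\<dots> \<le> (3 * \<epsilon> * \<mu>)\<^sup>2 / 10"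
    using collision_variance_arith[OF m assms(4) normsq_nonneg one_le_n_normsq normcube_le[OF assms(3)]]
    unfolding \<mu>_def by simp
  finally have "prod_prob q {..<m} (cube U m - ?A) \<le> 1/10"
    using assms(1) \<mu>_pos by (simp add: field_simps)
  moreover have "prod_prob q {..<m} (cube U m - ?A) = 1 - prod_prob q {..<m} ?A"
    unfolding cube_def by (intro prod_prob_compl) auto
  ultimately show ?thesis by simp
qed

end

theorem mainTheorem9:
  fixes U :: "'a set" and q :: "'a \<Rightarrow> real" and h :: "'a \<Rightarrow> nat"
    and n m :: nat and \<epsilon> \<delta> s :: real
  assumes finU: "finite U"
    and q_nonneg: "\<forall>u\<in>U. q u \<ge> 0"
    and q_sum: "(\<Sum>u\<in>U. q u) = 1"
    and h_range: "\<forall>u\<in>U. h u \<in> {1..n}"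
    and n_gt: "n > 24"
    and eps_pos: "0 < \<epsilon>" and eps_lt: "\<epsilon> < 1/3"
    and delta_pos: "\<delta> > 0"
    and m_def: "real m = \<epsilon> powr (-2) * real n powr (1 + \<delta>)"
    and s_pos: "s > 0"
  defines "A \<equiv> {y \<in> cube U m.
             \<bar>(\<Sum>i=1..n. real (kcount h m y i) * (real (kcount h m y i) - 1)
                        / (real m * (real m - 1))) / normsq U q h n - 1\<bar> \<le> 3 * \<epsilon>}"
  defines "C \<equiv> {x \<in> cube U m. convex_dist m x A < ereal s}"
  shows "prodprob q m C \<ge> 1 - 10/9 * exp (- (s^2) / 4)"
proof -
  interpret hashing U q h n
    using finU q_nonneg q_sum h_range by unfold_locales auto
  have "real n \<le> \<epsilon>\<^sup>2 * real m"
    using eps_pos delta_pos n_gt m_def by (intro sample_size_ge) auto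
  then have PA: "9/10 \<le> prod_prob q {..<m} A"
    unfolding A_def using eps_pos eps_lt n_gt by (intro collision_estimate_concentration) auto
  have "1 - exp (- s\<^sup>2 / 4) / prod_prob q {..<m} A \<le> prodprob q m C"
    unfolding C_def prodprob_eq_prod_prob using PA s_pos
    by (intro talagrand_concentration) (auto simp: A_def)
  moreover have "exp (- s\<^sup>2 / 4) / prod_prob q {..<m} A \<le> exp (- s\<^sup>2 / 4) / (9/10)"
    using PA by (intro divide_left_mono) auto
  ultimately show ?thesis
    by simp
qed

end
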